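(* Let $n\ge2$ and let $Q_0\subset\mathbb{R}^n$ be a cube. For $N$ sufficiently large (namely $2^{(N-1)n}>|Q_0|$), $$s_N(M^{p,\alpha})\lesssim\begin{cases}2^{-N(\frac2n-\frac1p)\frac n2}N^{-\frac\alpha2},& p>\frac n2,\ \alpha\in\mathbb{R},\\ N^{\frac{1-\alpha}2},& p=\frac n2,\ \alpha>1,\end{cases}$$ with implicit constants independent of $N$.
   Context: Cubes have sides parallel to axes; $\mathcal{D}(Q_0)$ is the family of dyadic subcubes of $Q_0$. A countable $\mathcal{Q}=(Q_i)\subset\mathcal{D}(Q_0)$ is sparse if there exist pairwise disjoint measurable $E_{Q_i}\subseteq Q_i$ with $|E_{Q_i}|\ge\frac12|Q_i|$; $S(Q_0)$ is the set of sparse families. For $f\in L^1(Q_0)$, $s_N(f)=\sup_{\mathcal{Q}\in S(Q_0)}\big[\sum_{Q\in\mathcal{Q},\,\ell(Q)\le2^{-(N-1)}\ell(Q_0)}\big(|Q|^{\frac1n-\frac12}\int_Q|f|\big)^2\big]^{1/2}$. For $1\le p\le\infty$, $\alpha\in\mathbb{R}$, the Morrey space $M^{p,\alpha}(Q_0)$ is normed by $\|f\|_{M^{p,\alpha}(Q_0)}=\sup_{Q\in\mathcal{D}(Q_0)}(1-(\log|Q|)_-)^\alpha|Q|^{-1/p'}\int_Q|f|$, where $(a)_-=\min\{a,0\}$ and $p'$ is the dual exponent; $s_N(M^{p,\alpha})=\sup\{s_N(f):\|f\|_{M^{p,\alpha}(Q_0)}\le1\}$. *)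

theory Defs
  imports "HOL-Analysis.Analysis"
begin

definition cube0 :: "real^'n \<Rightarrow> real \<Rightarrow> (real^'n) set" where
  "cube0 a l = cbox a (a + l *\<^sub>R (\<chi> i. 1))"

definition dyadic_cubes :: "real^'n \<Rightarrow> real \<Rightarrow> (real^'n) set set" where
  "dyadic_cubes a l =
     {cbox (a + (l / 2 ^ k) *\<^sub>R j) (a + (l / 2 ^ k) *\<^sub>R (j + (\<chi> i. 1))) | k j.
        \<forall>i. j $ i \<in> \<int> \<and> 0 \<le> j $ i \<and> j $ i < 2 ^ k}"

definition cube_side :: "(real^'n) set \<Rightarrow> real" where
  "cube_side Q = measure lebesgue Q powr (1 / real CARD('n))"

definition sparse_family :: "real^'n \<Rightarrow> real \<Rightarrow> (real^'n) set set \<Rightarrow> bool" where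
  "sparse_family a l \<Q> \<longleftrightarrow> countable \<Q> \<and> \<Q> \<subseteq> dyadic_cubes a l \<and>
     (\<exists>E. (\<forall>Q\<in>\<Q>. E Q \<in> sets lebesgue \<and> E Q \<subseteq> Q \<and>
              measure lebesgue (E Q) \<ge> 1/2 * measure lebesgue Q) \<and>
          (\<forall>Q\<in>\<Q>. \<forall>Q'\<in>\<Q>. Q \<noteq> Q' \<longrightarrow> E Q \<inter> E Q' = {}))"

text \<open>The square of s_N(f): supremum over sparse families of the (nonnegative, possibly
  infinite) sum, the sum written as supremum of its finite partial sums.\<close>

definition sN_sq :: "real^'n \<Rightarrow> real \<Rightarrow> nat \<Rightarrow> (real^'n \<Rightarrow> real) \<Rightarrow> ereal" where
  "sN_sq a l N f =
     (SUP \<Q> \<in> Collect (sparse_family a l).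
        SUP F \<in> {F. finite F \<and> F \<subseteq> {Q \<in> \<Q>. cube_side Q \<le> 2 powr (- (real N - 1)) * l}}.
          ereal (\<Sum>Q\<in>F. (measure lebesgue Q powr (1 / real CARD('n) - 1/2)
                             * integral Q (\<lambda>x. \<bar>f x\<bar>))\<^sup>2))"

definition sN :: "real^'n \<Rightarrow> real \<Rightarrow> nat \<Rightarrow> (real^'n \<Rightarrow> real) \<Rightarrow> ereal" where
  "sN a l N f = (if sN_sq a l N f = \<infinity> then \<infinity> else ereal (sqrt (real_of_ereal (sN_sq a l N f))))"

definition pinv :: "ereal \<Rightarrow> real" where
  "pinv p = (if p = \<infinity> then 0 else 1 / real_of_ereal p)"

text \<open>Morrey norm; |Q|^(-1/p') = |Q|^(-(1 - 1/p)); log is the natural logarithm.\<close>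

definition morrey_norm :: "real^'n \<Rightarrow> real \<Rightarrow> ereal \<Rightarrow> real \<Rightarrow> (real^'n \<Rightarrow> real) \<Rightarrow> ereal" where
  "morrey_norm a l p \<alpha> f =
     (SUP Q \<in> dyadic_cubes a l.
        ereal ((1 - min (ln (measure lebesgue Q)) 0) powr \<alpha>
               * measure lebesgue Q powr (- (1 - pinv p))
               * integral Q (\<lambda>x. \<bar>f x\<bar>)))"

definition sN_morrey :: "real^'n \<Rightarrow> real \<Rightarrow> nat \<Rightarrow> ereal \<Rightarrow> real \<Rightarrow> ereal" where
  "sN_morrey a l N p \<alpha> =
     (SUP f \<in> {f. f absolutely_integrable_on cube0 a l \<and> morrey_norm a l p \<alpha> f \<le> 1}. sN a l N f)"

end

theory Submission
  imports Defs
begin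

text \<open>Let \<open>w\<^sub>s(m) = m^s (1 - min (log m) 0)^(-\<alpha>)\<close> (\<open>morrey_weight s \<alpha> m\<close>). If the Morrey
  norm of \<open>f\<close> is at most 1, then \<open>\<integral>_Q |f| \<le> w\<^sub>1\<^sub>-\<^sub>1\<^sub>/\<^sub>p(|Q|)\<close> for every dyadic cube \<open>Q\<close>.
  Using this bound for one of the two factors \<open>\<integral>_Q |f|\<close> in each square gives
  \<open>(|Q|^(1/n - 1/2) \<integral>_Q |f|)^2 \<le> w\<^sub>2\<^sub>/\<^sub>n\<^sub>-\<^sub>1\<^sub>/\<^sub>p(|Q|) \<integral>_Q |f|\<close>. Distinct dyadic cubes of one level
  do not overlap, so their integrals add up to at most \<open>\<integral>_Q\<^sub>0 |f| \<le> w\<^sub>1\<^sub>-\<^sub>1\<^sub>/\<^sub>p(|Q\<^sub>0|)\<close>. Hence \<open>s\<^sub>N(f)^2\<close> is at most a constant times the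
  sum over \<open>k \<ge> N - 1\<close> of \<open>w\<^sub>2\<^sub>/\<^sub>n\<^sub>-\<^sub>1\<^sub>/\<^sub>p(2^(-k n) |Q\<^sub>0|)\<close>.

  The condition \<open>2^((N - 1) n) > |Q\<^sub>0|\<close> makes all these cubes have measure at most 1, so the
  logarithmic factor is affine in \<open>k\<close> and comparable to \<open>N\<close> at \<open>k = N - 1\<close>. For \<open>p > n/2\<close> the
  weights decay geometrically in \<open>k\<close> and the sum is of order \<open>2^(-N (2 - n/p)) N^(-\<alpha>)\<close>; for
  \<open>p = n/2\<close> it is a sum \<open>\<Sum>\<^sub>j (A + b j)^(-\<alpha>) \<lesssim> A^(1 - \<alpha>)\<close> with \<open>A\<close> comparable to \<open>N\<close>,
  which needs \<open>\<alpha> > 1\<close>.\<close>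

section \<open>Dyadic subcubes\<close>

definition dyadic_cube :: "real^'n \<Rightarrow> real \<Rightarrow> nat \<Rightarrow> real^'n \<Rightarrow> (real^'n) set" where
  "dyadic_cube a l k j = cbox (a + (l / 2 ^ k) *\<^sub>R j) (a + (l / 2 ^ k) *\<^sub>R (j + (\<chi> i. 1)))"

definition dyadic_index :: "nat \<Rightarrow> real^'n \<Rightarrow> bool" where
  "dyadic_index k j \<longleftrightarrow> (\<forall>i. j $ i \<in> \<int> \<and> 0 \<le> j $ i \<and> j $ i < 2 ^ k)"

lemma dyadic_cubes_iff:
  "Q \<in> dyadic_cubes a l \<longleftrightarrow> (\<exists>k j. dyadic_index k j \<and> Q = dyadic_cube a l k j)"
  unfolding dyadic_cubes_def dyadic_cube_def dyadic_index_def by blast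

lemma mem_dyadic_cube:
  "x \<in> dyadic_cube a l k j \<longleftrightarrow>
     (\<forall>i. a $ i + (l / 2 ^ k) * j $ i \<le> x $ i \<and> x $ i \<le> a $ i + (l / 2 ^ k) * (j $ i + 1))"
  by (simp add: dyadic_cube_def mem_box_cart)

lemma cube0_eq_dyadic_cube: "cube0 a l = dyadic_cube a l 0 0"
  unfolding cube0_def dyadic_cube_def by simp

lemma cube0_in_dyadic_cubes: "cube0 a l \<in> dyadic_cubes a l"
  unfolding dyadic_cubes_iff cube0_eq_dyadic_cube dyadic_index_def
  by (rule exI[of _ 0], rule exI[of _ 0]) simp

lemma measure_dyadic_cube:
  fixes a j :: "real^'n"
  assumes "l > 0"
  shows "measure lebesgue (dyadic_cube a l k j) = (l / 2 ^ k) ^ CARD('n)"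
proof -
  have h: "l / 2 ^ k > 0"
    using assms by simp
  then have "dyadic_cube a l k j \<noteq> {}"
    unfolding dyadic_cube_def by (auto simp: interval_eq_empty_cart algebra_simps)
  then show ?thesis
    unfolding dyadic_cube_def using h by (simp add: content_cbox_cart algebra_simps)
qed

lemma measure_cube0:
  fixes a :: "real^'n"
  assumes "l > 0"
  shows "measure lebesgue (cube0 a l) = l ^ CARD('n)"
  using measure_dyadic_cube[OF assms, of a 0 0] by (simp add: cube0_eq_dyadic_cube)

lemma cube_side_dyadic_cube:
  fixes a j :: "real^'n"
  assumes "l > 0"
  shows "cube_side (dyadic_cube a l k j) = l / 2 ^ k"
  unfolding cube_side_def measure_dyadic_cube[OF assms] using assms
  by (simp add: powr_realpow[symmetric] powr_powr)

lemma dyadic_level_ge_of_side_le: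
  fixes a j :: "real^'n"
  assumes "l > 0" "N \<ge> 1" "cube_side (dyadic_cube a l k j) \<le> 2 powr (- (real N - 1)) * l"
  shows "N - 1 \<le> k"
proof -
  have "2 powr (real N - 1) = 2 ^ (N - 1)"
    using assms(2) by (simp add: powr_realpow[symmetric] of_nat_diff)
  then have "2 powr (- (real N - 1)) = 1 / 2 ^ (N - 1)"
    unfolding powr_minus_divide by simp
  then have "l / 2 ^ k \<le> l / 2 ^ (N - 1)"
    using assms(3) unfolding cube_side_dyadic_cube[OF assms(1)] by simp
  show ?thesis
  proof (rule ccontr)
    assume "\<not> N - 1 \<le> k"
    then have "(2::real) ^ k < 2 ^ (N - 1)"
      by (intro power_strict_increasing) auto
    then have "l / 2 ^ (N - 1) < l / 2 ^ k"
      using assms(1) by (intro divide_strict_left_mono) auto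
    with \<open>l / 2 ^ k \<le> l / 2 ^ (N - 1)\<close> show False
      by linarith
  qed
qed

lemma le_pow_of_measure_cube0_less:
  fixes a :: "real^'n"
  assumes "l > 0" "N \<ge> 1" "measure lebesgue (cube0 a l) < 2 powr ((real N - 1) * real CARD('n))"
  shows "l \<le> 2 ^ (N - 1)"
proof -
  have "2 powr ((real N - 1) * real CARD('n)) = 2 powr real ((N - 1) * CARD('n))"
    using assms(2) by (simp add: of_nat_diff)
  also have "\<dots> = (2 ^ (N - 1)) ^ CARD('n)"
    by (subst powr_realpow) (simp_all add: power_mult)
  finally have "l ^ CARD('n) < (2 ^ (N - 1)) ^ CARD('n)"
    using assms(3) measure_cube0[OF assms(1), of a] by simp
  then have "l < 2 ^ (N - 1)"
    by (rule power_less_imp_less_base) simp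
  then show ?thesis
    by simp
qed

lemma dyadic_cube_subset_cube0:
  fixes a j :: "real^'n"
  assumes "l > 0" "dyadic_index k j"
  shows "dyadic_cube a l k j \<subseteq> cube0 a l"
proof
  fix x assume x: "x \<in> dyadic_cube a l k j"
  let ?h = "l / 2 ^ k"
  show "x \<in> cube0 a l"
    unfolding cube0_def mem_box_cart
  proof
    fix i
    obtain m where m: "j $ i = of_int m" "0 \<le> m" "m < 2 ^ k"
      using assms(2) unfolding dyadic_index_def
      by (metis Ints_cases of_int_0_le_iff of_int_less_iff of_int_numeral of_int_power)
    then have "?h * (j $ i + 1) \<le> ?h * 2 ^ k"
      using assms(1) by (intro mult_left_mono) (simp_all add: int_less_real_le)
    then have "?h * (j $ i + 1) \<le> l"
      by simp
    moreover have "0 \<le> ?h * j $ i"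
      using m assms(1) by simp
    moreover have "a $ i + ?h * j $ i \<le> x $ i" "x $ i \<le> a $ i + ?h * (j $ i + 1)"
      using x unfolding mem_dyadic_cube by blast+
    ultimately show "a $ i \<le> x $ i \<and> x $ i \<le> (a + l *\<^sub>R (\<chi> i. 1)) $ i"
      by simp
  qed
qed

lemma negligible_Int_dyadic_cubes:
  fixes a j j' :: "real^'n"
  assumes "l > 0" "dyadic_index k j" "dyadic_index k j'" "j \<noteq> j'"
  shows "negligible (dyadic_cube a l k j \<inter> dyadic_cube a l k j')"
proof -
  let ?h = "l / 2 ^ k"
  have h: "?h > 0"
    using assms by simp
  obtain i where "j $ i \<noteq> j' $ i"
    using assms(4) by (metis vec_eq_iff)
  moreover obtain m m' where m: "j $ i = of_int m" "j' $ i = of_int m'"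
    using assms(2,3) unfolding dyadic_index_def by (meson Ints_cases)
  ultimately consider "j $ i + 1 \<le> j' $ i" | "j' $ i + 1 \<le> j $ i"
    by (smt (verit, best) of_int_add of_int_le_iff of_int_1)
  then have "min (j $ i) (j' $ i) + 1 \<le> max (j $ i) (j' $ i)"
    by cases auto
  then have apart: "?h * (min (j $ i) (j' $ i) + 1) \<le> ?h * max (j $ i) (j' $ i)"
    by (rule mult_left_mono) (use h in simp)
  define c where "c = a $ i + ?h * max (j $ i) (j' $ i)"
  have "dyadic_cube a l k j \<inter> dyadic_cube a l k j' \<subseteq> {x. x \<bullet> axis i 1 = c}"
  proof
    fix x assume "x \<in> dyadic_cube a l k j \<inter> dyadic_cube a l k j'"
    then have "a $ i + ?h * max (j $ i) (j' $ i) \<le> x $ i"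
      "x $ i \<le> a $ i + ?h * (min (j $ i) (j' $ i) + 1)"
      unfolding Int_iff mem_dyadic_cube max_def min_def by auto
    with apart have "x $ i = c"
      unfolding c_def by linarith
    then show "x \<in> {x. x \<bullet> axis i 1 = c}"
      by (simp add: cart_eq_inner_axis[symmetric])
  qed
  moreover have "negligible {x::real^'n. x \<bullet> axis i 1 = c}"
    by (rule negligible_standard_hyperplane) (auto simp: Basis_vec_def)
  ultimately show ?thesis
    by (rule negligible_subset[rotated])
qed

lemma sum_integral_dyadic_level_le:
  fixes a :: "real^'n" and g :: "real^'n \<Rightarrow> real"
  assumes l: "l > 0" and g: "g integrable_on cube0 a l" "\<And>x. g x \<ge> 0"
    and G: "finite G" "\<And>Q. Q \<in> G \<Longrightarrow> \<exists>j. dyadic_index k j \<and> Q = dyadic_cube a l k j"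
  shows "(\<Sum>Q\<in>G. integral Q g) \<le> integral (cube0 a l) g"
proof -
  have sub: "Q \<subseteq> cube0 a l" if "Q \<in> G" for Q
    using G(2)[OF that] dyadic_cube_subset_cube0[OF l] by blast
  have int: "g integrable_on Q" if "Q \<in> G" for Q
    using G(2)[OF that] sub[OF that] integrable_on_subcbox[OF g(1)]
    unfolding dyadic_cube_def by blast
  have "pairwise (\<lambda>S S'. negligible (S \<inter> S')) G"
    using G(2) negligible_Int_dyadic_cubes[OF l] unfolding pairwise_def by metis
  then have "(g has_integral (\<Sum>Q\<in>G. integral Q g)) (\<Union>G)"
    using int by (intro has_integral_Union[OF G(1)]) auto
  then have "(\<Sum>Q\<in>G. integral Q g) = integral (\<Union>G) g"
    by (simp add: integral_unique)
  also have "\<dots> \<le> integral (cube0 a l) g"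
    using sub g \<open>(g has_integral _) (\<Union>G)\<close> by (intro integral_subset_le) auto
  finally show ?thesis .
qed

lemma sum_weighted_by_level_le:
  fixes lev :: "'a \<Rightarrow> 'b" and w :: "'b \<Rightarrow> real" and v :: "'a \<Rightarrow> real"
  assumes "finite F" "finite K" "lev ` F \<subseteq> K" "\<And>k. k \<in> K \<Longrightarrow> w k \<ge> 0"
    and "\<And>k. k \<in> K \<Longrightarrow> (\<Sum>Q | Q \<in> F \<and> lev Q = k. v Q) \<le> B"
  shows "(\<Sum>Q\<in>F. w (lev Q) * v Q) \<le> B * (\<Sum>k\<in>K. w k)"
proof -
  have "(\<Sum>Q\<in>F. w (lev Q) * v Q) = (\<Sum>k\<in>K. \<Sum>Q | Q \<in> F \<and> lev Q = k. w (lev Q) * v Q)"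
    using assms(1-3) by (rule sum.group[symmetric])
  also have "\<dots> = (\<Sum>k\<in>K. w k * (\<Sum>Q | Q \<in> F \<and> lev Q = k. v Q))"
    by (simp add: sum_distrib_left)
  also have "\<dots> \<le> (\<Sum>k\<in>K. w k * B)"
    using assms(4,5) by (intro sum_mono mult_left_mono)
  finally show ?thesis
    by (simp add: sum_distrib_left mult.commute)
qed

lemma pinv_less_inverse:
  assumes "ereal r < p" "r > 0"
  shows "pinv p < 1 / r"
  using assms by (cases p) (auto simp: pinv_def frac_less2)

lemma powr_half_square:
  fixes x e :: real
  assumes "x > 0"
  shows "(x powr (e / 2))\<^sup>2 = x powr e"
  using assms by (simp add: power2_eq_square powr_add[symmetric])

lemma one_plus_powr_le_exp:
  fixes x \<beta> \<delta> :: real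
  assumes "x \<ge> 0" "\<beta> \<ge> 0" "0 < \<delta>" "\<delta> \<le> 1"
  shows "(1 + x) powr \<beta> \<le> \<delta> powr (- \<beta>) * exp (\<delta> * \<beta> * x)"
proof -
  have "1 + x \<le> (1 + \<delta> * x) / \<delta>"
    using assms by (simp add: field_simps mult_left_le_one_le)
  also have "1 + \<delta> * x \<le> exp (\<delta> * x)"
    by (rule exp_ge_add_one_self)
  finally have "1 + x \<le> exp (\<delta> * x) / \<delta>"
    using assms by (simp add: divide_right_mono)
  then have "(1 + x) powr \<beta> \<le> (exp (\<delta> * x) / \<delta>) powr \<beta>"
    using assms by (intro powr_mono2) auto
  also have "\<dots> = \<delta> powr (- \<beta>) * exp (\<delta> * \<beta> * x)"
    using assms by (simp add: powr_def ln_div exp_add[symmetric] algebra_simps)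
  finally show ?thesis .
qed

lemma add_powr_neg_le:
  fixes A x \<alpha> :: real
  assumes "A \<ge> 1" "x \<ge> 0"
  shows "(A + x) powr (- \<alpha>) \<le> A powr (- \<alpha>) * (1 + x) powr (max (- \<alpha>) 0)"
proof (cases "\<alpha> \<ge> 0")
  case True
  then have "(A + x) powr (- \<alpha>) \<le> A powr (- \<alpha>)"
    using assms by (intro powr_mono2') auto
  then show ?thesis
    using True assms by simp
next
  case False
  have "A + x \<le> A * (1 + x)"
    using assms mult_right_mono[of 1 A x] by (simp add: algebra_simps)
  then have "(A + x) powr (- \<alpha>) \<le> (A * (1 + x)) powr (- \<alpha>)"
    using assms False by (intro powr_mono2) auto
  then show ?thesis
    using False assms by (simp add: powr_mult)
qed

lemma exp_mult_affine_powr_le: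
  fixes A b q \<alpha> \<delta> :: real
  assumes A: "A \<ge> 1" and b: "b > 0"
    and \<delta>: "0 < \<delta>" "\<delta> \<le> 1" "\<delta> * max (- \<alpha>) 0 * b \<le> q / 2"
  shows "exp (- q * real j) * (A + b * real j) powr (- \<alpha>)
           \<le> \<delta> powr (- max (- \<alpha>) 0) * A powr (- \<alpha>) * exp (- q / 2) ^ j"
proof -
  let ?\<beta> = "max (- \<alpha>) 0"
  have bj: "b * real j \<ge> 0"
    using b by simp
  have "(A + b * real j) powr (- \<alpha>) \<le> A powr (- \<alpha>) * (1 + b * real j) powr ?\<beta>"
    by (rule add_powr_neg_le[OF A bj])
  also have "\<dots> \<le> A powr (- \<alpha>) * (\<delta> powr (- ?\<beta>) * exp (\<delta> * ?\<beta> * (b * real j)))"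
    by (intro mult_left_mono one_plus_powr_le_exp bj \<delta>(1,2)) simp_all
  also have "\<delta> * ?\<beta> * (b * real j) \<le> q / 2 * real j"
    using mult_right_mono[OF \<delta>(3), of "real j"] by (simp add: mult.assoc)
  finally have "(A + b * real j) powr (- \<alpha>)
      \<le> A powr (- \<alpha>) * (\<delta> powr (- ?\<beta>) * exp (q / 2 * real j))"
    by (simp add: mult_left_mono)
  then have "exp (- q * real j) * (A + b * real j) powr (- \<alpha>)
      \<le> \<delta> powr (- ?\<beta>) * A powr (- \<alpha>) * (exp (- q * real j) * exp (q / 2 * real j))"
    by (simp add: mult_left_mono algebra_simps)
  also have "exp (- q * real j) * exp (q / 2 * real j) = exp (- q / 2) ^ j"
    by (simp add: exp_add[symmetric] exp_of_nat_mult[symmetric] algebra_simps)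
  finally show ?thesis .
qed

lemma sum_exp_mult_affine_powr_le:
  fixes b q \<alpha> :: real
  assumes b: "b > 0" and q: "q > 0"
  obtains D where "D \<ge> 0"
    "\<And>A J. A \<ge> 1 \<Longrightarrow> (\<Sum>j<J. exp (- q * real j) * (A + b * real j) powr (- \<alpha>)) \<le> D * A powr (- \<alpha>)"
proof -
  define \<beta> where "\<beta> = max (- \<alpha>) 0"
  \<comment> \<open>\<open>\<delta>\<close> is chosen so that the polynomial factor costs at most half of the exponential decay.\<close>
  define \<delta> where "\<delta> = (if \<beta> = 0 then 1 else min 1 (q / (2 * \<beta> * b)))"
  let ?r = "exp (- q / 2)"
  have "\<beta> \<ge> 0"
    unfolding \<beta>_def by simp
  then have \<delta>: "0 < \<delta>" "\<delta> \<le> 1" "\<delta> * \<beta> * b \<le> q / 2"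
    unfolding \<delta>_def using q b by (auto simp: field_simps min_def)
  have "(\<Sum>j<J. ?r ^ j) \<le> (\<Sum>j. ?r ^ j)" for J
    using q by (intro sum_le_suminf summable_geometric) auto
  also have "(\<Sum>j. ?r ^ j) = 1 / (1 - ?r)"
    using q by (intro suminf_geometric) simp
  finally have geometric: "(\<Sum>j<J. ?r ^ j) \<le> 1 / (1 - ?r)" for J .
  show ?thesis
  proof (rule that)
    show "\<delta> powr (- \<beta>) / (1 - ?r) \<ge> 0"
      using q by simp
    fix A :: real and J :: nat
    assume A: "A \<ge> 1"
    have "(\<Sum>j<J. exp (- q * real j) * (A + b * real j) powr (- \<alpha>))
        \<le> (\<Sum>j<J. \<delta> powr (- \<beta>) * A powr (- \<alpha>) * ?r ^ j)"
      using exp_mult_affine_powr_le[OF A b \<delta>[unfolded \<beta>_def]] unfolding \<beta>_def by (rule sum_mono)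
    also have "\<dots> = \<delta> powr (- \<beta>) * A powr (- \<alpha>) * (\<Sum>j<J. ?r ^ j)"
      by (simp add: sum_distrib_left)
    also have "\<dots> \<le> \<delta> powr (- \<beta>) * A powr (- \<alpha>) * (1 / (1 - ?r))"
      using geometric by (intro mult_left_mono) auto
    finally show "(\<Sum>j<J. exp (- q * real j) * (A + b * real j) powr (- \<alpha>))
        \<le> \<delta> powr (- \<beta>) / (1 - ?r) * A powr (- \<alpha>)"
      by simp
  qed
qed

lemma mult_powr_le_diff_powr:
  fixes y b \<alpha> :: real
  assumes y: "y > 0" and b: "b > 0" and \<alpha>: "\<alpha> > 1"
  shows "b * (\<alpha> - 1) * (y + b) powr (- \<alpha>) \<le> y powr (1 - \<alpha>) - (y + b) powr (1 - \<alpha>)"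
proof -
  have "\<exists>z. y < z \<and> z < y + b \<and>
      (y + b) powr (1 - \<alpha>) - y powr (1 - \<alpha>) = (y + b - y) * ((1 - \<alpha>) * z powr (1 - \<alpha> - 1))"
  proof (rule MVT2)
    fix x assume "y \<le> x" "x \<le> y + b"
    then show "((\<lambda>x. x powr (1 - \<alpha>)) has_real_derivative (1 - \<alpha>) * x powr (1 - \<alpha> - 1)) (at x)"
      using y by (intro has_real_derivative_powr) auto
  qed (use b in simp)
  then obtain z where z: "y < z" "z < y + b"
    and eq: "(y + b) powr (1 - \<alpha>) - y powr (1 - \<alpha>) = b * ((1 - \<alpha>) * z powr (- \<alpha>))"
    by auto
  have "(y + b) powr (- \<alpha>) \<le> z powr (- \<alpha>)"
    using z y \<alpha> by (intro powr_mono2') auto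
  then have "b * (\<alpha> - 1) * (y + b) powr (- \<alpha>) \<le> b * (\<alpha> - 1) * z powr (- \<alpha>)"
    using b \<alpha> by (intro mult_left_mono) auto
  also have "\<dots> = y powr (1 - \<alpha>) - (y + b) powr (1 - \<alpha>)"
    using eq by (simp add: algebra_simps)
  finally show ?thesis .
qed

lemma sum_affine_powr_le:
  fixes A b \<alpha> :: real
  assumes A: "A \<ge> 1" and b: "b > 0" and \<alpha>: "\<alpha> > 1"
  shows "(\<Sum>j<J. (A + b * real j) powr (- \<alpha>)) \<le> (1 + 1 / (b * (\<alpha> - 1))) * A powr (1 - \<alpha>)"
proof -
  define c where "c = b * (\<alpha> - 1)"
  have c: "c > 0"
    unfolding c_def using b \<alpha> by simp
  have telescope: "(\<Sum>j<Suc K. (A + b * real j) powr (- \<alpha>))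
      \<le> A powr (- \<alpha>) + (A powr (1 - \<alpha>) - (A + b * real K) powr (1 - \<alpha>)) / c" for K
  proof (induction K)
    case 0
    then show ?case
      by simp
  next
    case (Suc K)
    have "A + b * real K > 0"
      using A b by (simp add: add_pos_nonneg)
    from mult_powr_le_diff_powr[OF this b \<alpha>]
    have "(A + b * real (Suc K)) powr (- \<alpha>)
        \<le> ((A + b * real K) powr (1 - \<alpha>) - (A + b * real (Suc K)) powr (1 - \<alpha>)) / c"
      using c unfolding c_def by (simp add: field_simps)
    with Suc.IH show ?case
      by (simp add: diff_divide_distrib)
  qed
  have "A powr (- \<alpha>) \<le> A powr (1 - \<alpha>)"
    using A by (intro powr_mono) auto
  moreover have "(A + b * real K) powr (1 - \<alpha>) \<ge> 0" for K
    by simp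
  ultimately have "(\<Sum>j<J. (A + b * real j) powr (- \<alpha>)) \<le> A powr (1 - \<alpha>) + A powr (1 - \<alpha>) / c"
    using telescope[of "J - 1"] c
    by (cases J) (auto simp: divide_right_mono intro: order_trans[OF _ add_mono])
  then show ?thesis
    unfolding c_def by (simp add: field_simps)
qed

lemma powr_neg_le_of_affine:
  fixes x y b \<gamma> \<beta> :: real
  assumes x: "x \<ge> 1" and y: "y \<ge> 1" and b: "b > 0" and y_eq: "y = b * x + \<gamma>"
  shows "y powr (- \<beta>) \<le> (1 + b + \<bar>\<gamma>\<bar> + (1 + \<bar>\<gamma>\<bar>) / b) powr \<bar>\<beta>\<bar> * x powr (- \<beta>)"
proof -
  define c where "c = 1 + b + \<bar>\<gamma>\<bar> + (1 + \<bar>\<gamma>\<bar>) / b"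
  have c: "c \<ge> 1"
    unfolding c_def using b by simp
  have "y \<le> (b + \<bar>\<gamma>\<bar>) * x"
    using x y_eq mult_right_mono[of 1 x "\<bar>\<gamma>\<bar>"] by (simp add: algebra_simps)
  also have "\<dots> \<le> c * x"
    unfolding c_def using x b by (intro mult_right_mono) auto
  finally have y_le: "y \<le> c * x" .
  have "x = (y - \<gamma>) / b"
    using b y_eq by simp
  also have "\<dots> \<le> (1 + \<bar>\<gamma>\<bar>) * y / b"
    using b y mult_right_mono[of 1 y "\<bar>\<gamma>\<bar>"] by (intro divide_right_mono) (auto simp: algebra_simps)
  also have "\<dots> \<le> c * y"
    unfolding c_def using y b by (simp add: field_simps)
  finally have x_le: "x \<le> c * y" .
  show ?thesis
  proof (cases "\<beta> \<ge> 0")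
    case True
    have "y powr (- \<beta>) \<le> (x / c) powr (- \<beta>)"
      using True x c x_le by (intro powr_mono2') (auto simp: field_simps)
    also have "\<dots> = c powr \<beta> * x powr (- \<beta>)"
      using x c by (simp add: powr_divide powr_minus divide_simps)
    finally show ?thesis
      using True unfolding c_def by simp
  next
    case False
    have "y powr (- \<beta>) \<le> (c * x) powr (- \<beta>)"
      using False y y_le by (intro powr_mono2) auto
    also have "\<dots> = c powr (- \<beta>) * x powr (- \<beta>)"
      using x c by (simp add: powr_mult)
    finally show ?thesis
      using False unfolding c_def by simp
  qed
qed

section \<open>Morrey weights of the dyadic levels\<close>

definition morrey_weight :: "real \<Rightarrow> real \<Rightarrow> real \<Rightarrow> real" where
  "morrey_weight s \<alpha> m = m powr s * (1 - min (ln m) 0) powr (- \<alpha>)"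

lemma morrey_weight_nonneg: "morrey_weight s \<alpha> m \<ge> 0"
  unfolding morrey_weight_def by simp

lemma integral_le_morrey_weight:
  fixes a :: "real^'n" and f :: "real^'n \<Rightarrow> real"
  assumes "morrey_norm a l p \<alpha> f \<le> 1" "Q \<in> dyadic_cubes a l" "measure lebesgue Q > 0"
  shows "integral Q (\<lambda>x. \<bar>f x\<bar>) \<le> morrey_weight (1 - pinv p) \<alpha> (measure lebesgue Q)"
proof -
  define m where "m = measure lebesgue Q"
  define L where "L = 1 - min (ln m) 0"
  have pos: "m > 0" "L > 0"
    using assms(3) unfolding m_def L_def by simp_all
  have "ereal (L powr \<alpha> * m powr (- (1 - pinv p)) * integral Q (\<lambda>x. \<bar>f x\<bar>))
      \<le> morrey_norm a l p \<alpha> f"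
    unfolding morrey_norm_def m_def L_def using assms(2) by (rule SUP_upper)
  also have "\<dots> \<le> 1"
    by fact
  finally have "L powr \<alpha> * m powr (- (1 - pinv p)) * integral Q (\<lambda>x. \<bar>f x\<bar>) \<le> 1"
    by (simp add: one_ereal_def)
  then have "integral Q (\<lambda>x. \<bar>f x\<bar>) \<le> 1 / (L powr \<alpha> * m powr (- (1 - pinv p)))"
    using pos by (simp add: field_simps)
  also have "\<dots> = m powr (1 - pinv p) * L powr (- \<alpha>)"
    using pos by (simp add: powr_minus field_simps) (simp add: powr_add[symmetric])
  finally show ?thesis
    unfolding morrey_weight_def m_def L_def .
qed

lemma square_le_morrey_weight_mult:
  fixes m A e \<pi> \<alpha> :: real
  assumes "m > 0" "0 \<le> A" "A \<le> morrey_weight (1 - \<pi>) \<alpha> m"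
  shows "(m powr (e - 1/2) * A)\<^sup>2 \<le> morrey_weight (2 * e - \<pi>) \<alpha> m * A"
proof -
  have "(m powr (e - 1/2) * A)\<^sup>2 = m powr (2 * e - 1) * A * A"
    using assms(1) by (simp add: power2_eq_square powr_add[symmetric] algebra_simps)
  also have "\<dots> \<le> m powr (2 * e - 1) * morrey_weight (1 - \<pi>) \<alpha> m * A"
    using assms(2,3) by (intro mult_right_mono mult_left_mono) auto
  also have "\<dots> = morrey_weight (2 * e - \<pi>) \<alpha> m * A"
    unfolding morrey_weight_def mult.assoc[symmetric] powr_add[symmetric] by simp
  finally show ?thesis .
qed

lemma morrey_weight_dyadic_level:
  fixes h s \<alpha> :: real and d j :: nat
  assumes "0 < h" "h \<le> 1"
  shows "morrey_weight s \<alpha> ((h / 2 ^ j) ^ d)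
           = (h ^ d) powr s * (exp (- (s * d * ln 2) * j) * (1 - d * ln h + d * ln 2 * j) powr (- \<alpha>))"
proof -
  have ln_eq: "ln ((h / 2 ^ j) ^ d) = d * ln h - d * ln 2 * j"
    using assms(1) by (simp add: ln_realpow ln_div algebra_simps)
  moreover have "d * ln h \<le> 0" "0 \<le> d * ln 2 * j"
    using assms by (simp_all add: mult_nonneg_nonpos)
  ultimately have "min (ln ((h / 2 ^ j) ^ d)) 0 = d * ln h - d * ln 2 * j"
    by linarith
  then have log_factor: "1 - min (ln ((h / 2 ^ j) ^ d)) 0 = 1 - d * ln h + d * ln 2 * j"
    by simp
  have power_factor: "((h / 2 ^ j) ^ d) powr s = (h ^ d) powr s * exp (- (s * d * ln 2) * j)"
    using assms(1) by (simp add: powr_def ln_eq ln_realpow ln_div exp_add[symmetric] algebra_simps)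
  show ?thesis
    unfolding morrey_weight_def log_factor power_factor by (simp add: mult.assoc)
qed

lemma sum_morrey_weight_levels:
  fixes l s \<alpha> :: real and d K M :: nat
  assumes "0 < l" "l \<le> 2 ^ K"
  shows "(\<Sum>k\<in>{K..M}. morrey_weight s \<alpha> ((l / 2 ^ k) ^ d))
           = ((l / 2 ^ K) ^ d) powr s
             * (\<Sum>j<Suc M - K. exp (- (s * d * ln 2) * j)
                                  * (1 - d * ln (l / 2 ^ K) + d * ln 2 * j) powr (- \<alpha>))"
proof -
  have "(\<Sum>k\<in>{K..M}. morrey_weight s \<alpha> ((l / 2 ^ k) ^ d))
      = (\<Sum>j<Suc M - K. morrey_weight s \<alpha> ((l / 2 ^ K / 2 ^ j) ^ d))"
    by (simp add: atLeastLessThanSuc_atLeastAtMost[symmetric] sum.atLeastLessThan_shift_0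
        atLeast0LessThan power_add mult.commute)
  also have "\<dots> = (\<Sum>j<Suc M - K. ((l / 2 ^ K) ^ d) powr s
             * (exp (- (s * d * ln 2) * j) * (1 - d * ln (l / 2 ^ K) + d * ln 2 * j) powr (- \<alpha>)))"
    using assms by (intro sum.cong refl morrey_weight_dyadic_level) simp_all
  finally show ?thesis
    by (simp add: sum_distrib_left)
qed

lemma dyadic_level_log_powr_le:
  fixes l :: real and d :: nat
  assumes l: "l > 0" and d: "d > 0"
  obtains c where "\<And>N \<beta>. N \<ge> 1 \<Longrightarrow> l \<le> 2 ^ (N - 1) \<Longrightarrow>
      (1 - d * ln (l / 2 ^ (N - 1))) powr (- \<beta>) \<le> c powr \<bar>\<beta>\<bar> * real N powr (- \<beta>)"
proof -
  define b where "b = d * ln 2"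
  define \<gamma> where "\<gamma> = 1 - d * ln 2 - d * ln l"
  have b: "b > 0"
    unfolding b_def using d by simp
  show ?thesis
  proof (rule that)
    fix N :: nat and \<beta> :: real
    assume N: "N \<ge> 1" and level: "l \<le> 2 ^ (N - 1)"
    have "1 - d * ln (l / 2 ^ (N - 1)) = b * real N + \<gamma>"
      unfolding b_def \<gamma>_def using l N by (simp add: ln_div ln_realpow of_nat_diff algebra_simps)
    moreover have "1 - d * ln (l / 2 ^ (N - 1)) \<ge> 1"
      using l level by (simp add: mult_nonneg_nonpos)
    ultimately show "(1 - d * ln (l / 2 ^ (N - 1))) powr (- \<beta>)
        \<le> (1 + b + \<bar>\<gamma>\<bar> + (1 + \<bar>\<gamma>\<bar>) / b) powr \<bar>\<beta>\<bar> * real N powr (- \<beta>)"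
      using N b by (intro powr_neg_le_of_affine) auto
  qed
qed

lemma dyadic_level_powr:
  fixes l s :: real and d N :: nat
  assumes "l > 0" "N \<ge> 1"
  shows "((l / 2 ^ (N - 1)) ^ d) powr s
           = ((2 * l) ^ d) powr s * (2 powr (- real N * s * (real d / 2)))\<^sup>2"
  using assms by (simp add: powr_def ln_div ln_mult ln_realpow of_nat_diff power2_eq_square
      exp_add[symmetric] algebra_simps)

lemma sum_morrey_weight_levels_subcritical:
  fixes l s \<alpha> :: real and d :: nat
  assumes l: "l > 0" and s: "s > 0" and d: "d > 0"
  obtains C where "C \<ge> 0" "\<And>N M. N \<ge> 1 \<Longrightarrow> l \<le> 2 ^ (N - 1) \<Longrightarrow>
      (\<Sum>k\<in>{N-1..M}. morrey_weight s \<alpha> ((l / 2 ^ k) ^ d))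
        \<le> C * (2 powr (- real N * s * (real d / 2)) * real N powr (- \<alpha> / 2))\<^sup>2"
proof -
  define b where "b = d * ln 2"
  have b: "b > 0"
    unfolding b_def using d by simp
  obtain D where D: "D \<ge> 0" "\<And>A J. A \<ge> 1 \<Longrightarrow>
      (\<Sum>j<J. exp (- (s * b) * real j) * (A + b * real j) powr (- \<alpha>)) \<le> D * A powr (- \<alpha>)"
    using sum_exp_mult_affine_powr_le[OF b mult_pos_pos[OF s b]] by blast
  obtain c where c: "\<And>N \<beta>. N \<ge> 1 \<Longrightarrow> l \<le> 2 ^ (N - 1) \<Longrightarrow>
      (1 - d * ln (l / 2 ^ (N - 1))) powr (- \<beta>) \<le> c powr \<bar>\<beta>\<bar> * real N powr (- \<beta>)"
    using dyadic_level_log_powr_le[OF l d] by blast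
  show ?thesis
  proof (rule that)
    show "((2 * l) ^ d) powr s * c powr \<bar>\<alpha>\<bar> * D \<ge> 0"
      using D(1) by simp
    fix N M :: nat
    assume N: "N \<ge> 1" and level: "l \<le> 2 ^ (N - 1)"
    then have N_pos: "real N > 0"
      by simp
    define A where "A = 1 - d * ln (l / 2 ^ (N - 1))"
    have A: "A \<ge> 1"
      unfolding A_def using l level by (simp add: mult_nonneg_nonpos)
    have "(\<Sum>k\<in>{N-1..M}. morrey_weight s \<alpha> ((l / 2 ^ k) ^ d))
        = ((l / 2 ^ (N - 1)) ^ d) powr s
          * (\<Sum>j<Suc M - (N - 1). exp (- (s * b) * real j) * (A + b * real j) powr (- \<alpha>))"
      unfolding sum_morrey_weight_levels[OF l level] A_def b_def by (simp add: mult.assoc)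
    also have "\<dots> \<le> ((l / 2 ^ (N - 1)) ^ d) powr s * (D * (c powr \<bar>\<alpha>\<bar> * real N powr (- \<alpha>)))"
      using D c[OF N level, of \<alpha>] unfolding A_def[symmetric]
      by (intro mult_left_mono order_trans[OF D(2)[OF A]]) auto
    also have "\<dots> = ((2 * l) ^ d) powr s * c powr \<bar>\<alpha>\<bar> * D
        * (2 powr (- real N * s * (real d / 2)) * real N powr (- \<alpha> / 2))\<^sup>2"
      unfolding dyadic_level_powr[OF l N] power_mult_distrib powr_half_square[OF N_pos]
      by (simp only: mult_ac)
    finally show "(\<Sum>k\<in>{N-1..M}. morrey_weight s \<alpha> ((l / 2 ^ k) ^ d))
        \<le> ((2 * l) ^ d) powr s * c powr \<bar>\<alpha>\<bar> * D
          * (2 powr (- real N * s * (real d / 2)) * real N powr (- \<alpha> / 2))\<^sup>2" .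
  qed
qed

lemma sum_morrey_weight_levels_critical:
  fixes l \<alpha> :: real and d :: nat
  assumes l: "l > 0" and \<alpha>: "\<alpha> > 1" and d: "d > 0"
  obtains C where "C \<ge> 0" "\<And>N M. N \<ge> 1 \<Longrightarrow> l \<le> 2 ^ (N - 1) \<Longrightarrow>
      (\<Sum>k\<in>{N-1..M}. morrey_weight 0 \<alpha> ((l / 2 ^ k) ^ d)) \<le> C * (real N powr ((1 - \<alpha>) / 2))\<^sup>2"
proof -
  define b where "b = d * ln 2"
  have b: "b > 0"
    unfolding b_def using d by simp
  obtain c where c: "\<And>N \<beta>. N \<ge> 1 \<Longrightarrow> l \<le> 2 ^ (N - 1) \<Longrightarrow>
      (1 - d * ln (l / 2 ^ (N - 1))) powr (- \<beta>) \<le> c powr \<bar>\<beta>\<bar> * real N powr (- \<beta>)"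
    using dyadic_level_log_powr_le[OF l d] by blast
  show ?thesis
  proof (rule that)
    show "(1 + 1 / (b * (\<alpha> - 1))) * c powr \<bar>\<alpha> - 1\<bar> \<ge> 0"
      using b \<alpha> by simp
    fix N M :: nat
    assume N: "N \<ge> 1" and level: "l \<le> 2 ^ (N - 1)"
    then have N_pos: "real N > 0"
      by simp
    define A where "A = 1 - d * ln (l / 2 ^ (N - 1))"
    have A: "A \<ge> 1"
      unfolding A_def using l level by (simp add: mult_nonneg_nonpos)
    have "(\<Sum>k\<in>{N-1..M}. morrey_weight 0 \<alpha> ((l / 2 ^ k) ^ d))
        = (\<Sum>j<Suc M - (N - 1). (A + b * real j) powr (- \<alpha>))"
      unfolding sum_morrey_weight_levels[OF l level] A_def b_def using l by simp
    also have "\<dots> \<le> (1 + 1 / (b * (\<alpha> - 1))) * A powr (1 - \<alpha>)"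
      by (rule sum_affine_powr_le[OF A b \<alpha>])
    also have "\<dots> \<le> (1 + 1 / (b * (\<alpha> - 1))) * (c powr \<bar>\<alpha> - 1\<bar> * real N powr (1 - \<alpha>))"
      using c[OF N level, of "\<alpha> - 1"] b \<alpha> unfolding A_def
      by (intro mult_left_mono) auto
    finally show "(\<Sum>k\<in>{N-1..M}. morrey_weight 0 \<alpha> ((l / 2 ^ k) ^ d))
        \<le> (1 + 1 / (b * (\<alpha> - 1))) * c powr \<bar>\<alpha> - 1\<bar> * (real N powr ((1 - \<alpha>) / 2))\<^sup>2"
      unfolding powr_half_square[OF N_pos] by (simp only: mult_ac)
  qed
qed

section \<open>Bounds for the sparse square function\<close>

lemma square_term_dyadic_cube_le:
  fixes a j :: "real^'n" and f :: "real^'n \<Rightarrow> real"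
  assumes l: "l > 0" and f: "f absolutely_integrable_on cube0 a l"
    and mor: "morrey_norm a l p \<alpha> f \<le> 1" and j: "dyadic_index k j"
  defines "Q \<equiv> dyadic_cube a l k j"
  shows "(measure lebesgue Q powr (1 / real CARD('n) - 1/2) * integral Q (\<lambda>x. \<bar>f x\<bar>))\<^sup>2
           \<le> morrey_weight (2 / real CARD('n) - pinv p) \<alpha> ((l / 2 ^ k) ^ CARD('n))
              * integral Q (\<lambda>x. \<bar>f x\<bar>)"
proof -
  have m: "measure lebesgue Q = (l / 2 ^ k) ^ CARD('n)"
    unfolding Q_def by (rule measure_dyadic_cube[OF l])
  then have pos: "measure lebesgue Q > 0"
    using l by simp
  have g: "(\<lambda>x. \<bar>f x\<bar>) integrable_on cube0 a l"
    using f by (simp add: absolutely_integrable_on_def)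
  have "(\<lambda>x. \<bar>f x\<bar>) integrable_on Q"
    using integrable_on_subcbox[OF g] dyadic_cube_subset_cube0[OF l j]
    unfolding Q_def dyadic_cube_def by blast
  then have "0 \<le> integral Q (\<lambda>x. \<bar>f x\<bar>)"
    by (rule integral_nonneg) simp
  moreover have "Q \<in> dyadic_cubes a l"
    using j unfolding Q_def dyadic_cubes_iff by blast
  then have "integral Q (\<lambda>x. \<bar>f x\<bar>) \<le> morrey_weight (1 - pinv p) \<alpha> (measure lebesgue Q)"
    by (rule integral_le_morrey_weight[OF mor _ pos])
  ultimately have "(measure lebesgue Q powr (1 / real CARD('n) - 1/2) * integral Q (\<lambda>x. \<bar>f x\<bar>))\<^sup>2
      \<le> morrey_weight (2 * (1 / real CARD('n)) - pinv p) \<alpha> (measure lebesgue Q)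
         * integral Q (\<lambda>x. \<bar>f x\<bar>)"
    by (rule square_le_morrey_weight_mult[OF pos])
  then show ?thesis
    unfolding m by simp
qed

lemma sum_sq_le_integral_mult_level_weights:
  fixes a :: "real^'n" and f :: "real^'n \<Rightarrow> real"
  assumes l: "l > 0" and f: "f absolutely_integrable_on cube0 a l"
    and mor: "morrey_norm a l p \<alpha> f \<le> 1" and N: "N \<ge> 1"
    and F: "finite F" "F \<subseteq> dyadic_cubes a l"
    and side: "\<And>Q. Q \<in> F \<Longrightarrow> cube_side Q \<le> 2 powr (- (real N - 1)) * l"
  obtains M where "(\<Sum>Q\<in>F. (measure lebesgue Q powr (1 / real CARD('n) - 1/2)
                               * integral Q (\<lambda>x. \<bar>f x\<bar>))\<^sup>2)
      \<le> integral (cube0 a l) (\<lambda>x. \<bar>f x\<bar>)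
          * (\<Sum>k\<in>{N-1..M}. morrey_weight (2 / real CARD('n) - pinv p) \<alpha> ((l / 2 ^ k) ^ CARD('n)))"
proof -
  let ?g = "\<lambda>x. \<bar>f x\<bar>"
  let ?w = "\<lambda>k. morrey_weight (2 / real CARD('n) - pinv p) \<alpha> ((l / 2 ^ k) ^ CARD('n))"
  have "\<forall>Q\<in>F. \<exists>k j. dyadic_index k j \<and> Q = dyadic_cube a l k j"
    using F(2) dyadic_cubes_iff by blast
  then obtain lev where lev: "\<And>Q. Q \<in> F \<Longrightarrow> \<exists>j. dyadic_index (lev Q) j \<and> Q = dyadic_cube a l (lev Q) j"
    by metis
  have g: "?g integrable_on cube0 a l"
    using f by (simp add: absolutely_integrable_on_def)
  have term_le: "(measure lebesgue Q powr (1 / real CARD('n) - 1/2) * integral Q ?g)\<^sup>2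
      \<le> ?w (lev Q) * integral Q ?g" if Q: "Q \<in> F" for Q
  proof -
    obtain j where j: "dyadic_index (lev Q) j" "dyadic_cube a l (lev Q) j = Q"
      using lev[OF Q] by metis
    show ?thesis
      using square_term_dyadic_cube_le[OF l f mor j(1)] unfolding j(2) .
  qed
  define M where "M = Max (insert 0 (lev ` F))"
  have "lev ` F \<subseteq> {N-1..M}"
  proof safe
    fix Q assume Q: "Q \<in> F"
    then obtain j where "dyadic_cube a l (lev Q) j = Q"
      using lev by metis
    then have "N - 1 \<le> lev Q"
      using dyadic_level_ge_of_side_le[OF l N] side[OF Q] by metis
    moreover have "lev Q \<le> M"
      unfolding M_def using F(1) Q by (intro Max_ge) auto
    ultimately show "lev Q \<in> {N-1..M}"
      by simp
  qed
  then have "(\<Sum>Q\<in>F. ?w (lev Q) * integral Q ?g) \<le> integral (cube0 a l) ?g * (\<Sum>k\<in>{N-1..M}. ?w k)"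
    using F(1) lev by (intro sum_weighted_by_level_le sum_integral_dyadic_level_le[OF l g])
      (auto simp: morrey_weight_nonneg)
  with sum_mono[of F, OF term_le] show ?thesis
    by (intro that[of M]) (rule order_trans)
qed

lemma sN_le_sqrt:
  fixes a :: "real^'n" and f :: "real^'n \<Rightarrow> real"
  assumes B: "B \<ge> 0"
    and sums: "\<And>\<Q> F. sparse_family a l \<Q> \<Longrightarrow> finite F \<Longrightarrow>
              F \<subseteq> {Q \<in> \<Q>. cube_side Q \<le> 2 powr (- (real N - 1)) * l} \<Longrightarrow>
              (\<Sum>Q\<in>F. (measure lebesgue Q powr (1 / real CARD('n) - 1/2)
                             * integral Q (\<lambda>x. \<bar>f x\<bar>))\<^sup>2) \<le> B"
  shows "sN a l N f \<le> ereal (sqrt B)"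
proof -
  have "sN_sq a l N f \<le> ereal B"
    unfolding sN_sq_def using sums by (intro SUP_least) auto
  then have "sN_sq a l N f \<noteq> \<infinity>" "real_of_ereal (sN_sq a l N f) \<le> B"
    using B by (cases "sN_sq a l N f"; simp)+
  then show ?thesis
    unfolding sN_def by simp
qed

lemma sN_morrey_le:
  fixes a :: "real^'n"
  assumes l: "l > 0" and N: "N \<ge> 1" and C: "C \<ge> 0" and X: "X \<ge> 0"
    and weights: "\<And>M. (\<Sum>k\<in>{N-1..M}. morrey_weight (2 / real CARD('n) - pinv p) \<alpha>
                                          ((l / 2 ^ k) ^ CARD('n))) \<le> C * X\<^sup>2"
  shows "sN_morrey a l N p \<alpha> \<le> ereal (sqrt (morrey_weight (1 - pinv p) \<alpha> (l ^ CARD('n)) * C) * X)"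
  unfolding sN_morrey_def
proof (intro SUP_least, safe)
  fix f :: "real^'n \<Rightarrow> real"
  assume f: "f absolutely_integrable_on cube0 a l" and mor: "morrey_norm a l p \<alpha> f \<le> 1"
  let ?K = "morrey_weight (1 - pinv p) \<alpha> (l ^ CARD('n))"
  let ?I = "integral (cube0 a l) (\<lambda>x. \<bar>f x\<bar>)"
  have I: "?I \<le> ?K"
    using integral_le_morrey_weight[OF mor cube0_in_dyadic_cubes] measure_cube0[OF l, of a] l by simp
  have "sqrt (?K * C) * X = sqrt (?K * (C * X\<^sup>2))"
    using X by (simp add: real_sqrt_mult)
  also have "sN a l N f \<le> ereal (sqrt (?K * (C * X\<^sup>2)))"
  proof (rule sN_le_sqrt)
    show "0 \<le> ?K * (C * X\<^sup>2)"
      using C by (simp add: morrey_weight_nonneg)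
    fix \<Q> F assume "sparse_family a l \<Q>" "finite F"
      "F \<subseteq> {Q \<in> \<Q>. cube_side Q \<le> 2 powr (- (real N - 1)) * l}"
    then have "F \<subseteq> dyadic_cubes a l" "\<And>Q. Q \<in> F \<Longrightarrow> cube_side Q \<le> 2 powr (- (real N - 1)) * l"
      unfolding sparse_family_def by auto
    then obtain M where "(\<Sum>Q\<in>F. (measure lebesgue Q powr (1 / real CARD('n) - 1/2)
                               * integral Q (\<lambda>x. \<bar>f x\<bar>))\<^sup>2)
      \<le> ?I * (\<Sum>k\<in>{N-1..M}. morrey_weight (2 / real CARD('n) - pinv p) \<alpha> ((l / 2 ^ k) ^ CARD('n)))"
      using sum_sq_le_integral_mult_level_weights[OF l f mor N \<open>finite F\<close>] by metis
    also have "\<dots> \<le> ?K * (C * X\<^sup>2)"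
      using I weights morrey_weight_nonneg by (intro mult_mono sum_nonneg) auto
    finally show "(\<Sum>Q\<in>F. (measure lebesgue Q powr (1 / real CARD('n) - 1/2)
                               * integral Q (\<lambda>x. \<bar>f x\<bar>))\<^sup>2) \<le> ?K * (C * X\<^sup>2)" .
  qed
  finally show "sN a l N f \<le> ereal (sqrt (?K * C) * X)"
    by simp
qed

lemma sN_morrey_bound_of_level_weights:
  fixes a :: "real^'n" and X :: "nat \<Rightarrow> real"
  assumes l: "l > 0" and C: "C \<ge> 0" and X: "\<And>N. X N \<ge> 0"
    and weights: "\<And>N M. N \<ge> 1 \<Longrightarrow> l \<le> 2 ^ (N - 1) \<Longrightarrow>
      (\<Sum>k\<in>{N-1..M}. morrey_weight (2 / real CARD('n) - pinv p) \<alpha> ((l / 2 ^ k) ^ CARD('n)))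
        \<le> C * (X N)\<^sup>2"
  shows "\<exists>C'. \<forall>N. N \<ge> 1 \<longrightarrow> 2 powr ((real N - 1) * real CARD('n)) > measure lebesgue (cube0 a l) \<longrightarrow>
           sN_morrey a l N p \<alpha> \<le> ereal (C' * X N)"
proof (intro exI allI impI)
  fix N :: nat
  assume N: "N \<ge> 1" and "2 powr ((real N - 1) * real CARD('n)) > measure lebesgue (cube0 a l)"
  then have "l \<le> 2 ^ (N - 1)"
    by (intro le_pow_of_measure_cube0_less[OF l])
  then show "sN_morrey a l N p \<alpha> \<le> ereal (sqrt (morrey_weight (1 - pinv p) \<alpha> (l ^ CARD('n)) * C) * X N)"
    by (intro sN_morrey_le[OF l N C X] weights[OF N])
qed

theorem proposition5p2:
  fixes a :: "real^'n" and l :: real and p :: ereal and \<alpha> :: real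
  assumes "CARD('n) \<ge> 2" and "l > 0" and "p \<ge> 1"
  shows "(p > ereal (real CARD('n) / 2) \<longrightarrow>
            (\<exists>C::real. \<forall>N::nat. N \<ge> 1 \<longrightarrow>
               2 powr ((real N - 1) * real CARD('n)) > measure lebesgue (cube0 a l) \<longrightarrow>
               sN_morrey a l N p \<alpha> \<le>
                 ereal (C * (2 powr (- real N * (2 / real CARD('n) - pinv p) * (real CARD('n) / 2))
                             * real N powr (- \<alpha> / 2)))))
       \<and> (p = ereal (real CARD('n) / 2) \<and> \<alpha> > 1 \<longrightarrow>
            (\<exists>C::real. \<forall>N::nat. N \<ge> 1 \<longrightarrow>
               2 powr ((real N - 1) * real CARD('n)) > measure lebesgue (cube0 a l) \<longrightarrow>
               sN_morrey a l N p \<alpha> \<le> ereal (C * real N powr ((1 - \<alpha>) / 2))))"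
proof -
  have d: "CARD('n) > 0"
    by simp
  show ?thesis
  proof (intro conjI impI)
    assume "p > ereal (real CARD('n) / 2)"
    then have "2 / real CARD('n) - pinv p > 0"
      using pinv_less_inverse[of "real CARD('n) / 2" p] by simp
    then show "\<exists>C. \<forall>N. N \<ge> 1 \<longrightarrow> 2 powr ((real N - 1) * real CARD('n)) > measure lebesgue (cube0 a l) \<longrightarrow>
        sN_morrey a l N p \<alpha> \<le> ereal (C * (2 powr (- real N * (2 / real CARD('n) - pinv p) * (real CARD('n) / 2))
                                        * real N powr (- \<alpha> / 2)))"
      by (rule sum_morrey_weight_levels_subcritical[OF \<open>l > 0\<close> _ d])
        (rule sN_morrey_bound_of_level_weights[OF \<open>l > 0\<close>]; simp)
  next
    assume "p = ereal (real CARD('n) / 2) \<and> \<alpha> > 1"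
    then have s: "2 / real CARD('n) - pinv p = 0" and \<alpha>: "\<alpha> > 1"
      by (simp_all add: pinv_def)
    show "\<exists>C. \<forall>N. N \<ge> 1 \<longrightarrow> 2 powr ((real N - 1) * real CARD('n)) > measure lebesgue (cube0 a l) \<longrightarrow>
        sN_morrey a l N p \<alpha> \<le> ereal (C * real N powr ((1 - \<alpha>) / 2))"
      by (rule sum_morrey_weight_levels_critical[OF \<open>l > 0\<close> \<alpha> d])
        (rule sN_morrey_bound_of_level_weights[OF \<open>l > 0\<close>]; simp add: s)
  qed
qed

end
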